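(* Consider a single advertising slot sold by the following hybrid auction. Each advertiser $j$ submits a bid pair $(m_j,c_j)$ (per-impression bid and per-click bid). The auctioneer computes for each advertiser an index $q_j>0$ independent of the bids; the effective bid is $R_j=\max(m_j,c_jq_j)$. The advertiser with the highest effective bid wins; letting $R_{-j^*}$ be the highest competing effective bid, the winner $j^*$ pays $R_{-j^*}$ per impression if $m_{j^*}>c_{j^*}q_{j^*}$, and otherwise pays $R_{-j^*}/q_{j^*}$ per click. The corresponding auction that ignores per-impression bids uses effective bids $c_jq_j$, awards the slot to the highest one, and charges the winner the second highest value of $c_jq_j$ divided by its own $q$ per click. Suppose each advertiser $j$ has per-click value $v_j$ and knows its click-through probability $p_j$ exactly, and bids truthfully $(m_j,c_j)=(v_jp_j,v_j)$. The auctioneer has a prior $\mathcal{Q}_j=\mathrm{Beta}(\alpha_j,\beta_j)$ with $\alpha_j,\beta_j\ge 1$ on the click-through probability of advertiser $j$, each $p_j$ is drawn from $\mathcal{Q}_j$, and $q_j$ is the Gittins index of $\mathcal{Q}_j$ for an arbitrary discount factor $\gamma_a\in[0,1)$. Then the expected revenue of the auctioneer at the current step under the hybrid auction is at least $1-1/e$ times the expected revenue of the corresponding auction that ignores the per-impression bids.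
   Context: $\mathrm{Beta}(\alpha,\beta)$ denotes the distribution on $[0,1]$ with density proportional to $x^{\alpha-1}(1-x)^{\beta-1}$. Gittins index: for a coin whose probability of heads has prior distribution $\mathcal{Q}$ (updated by Bayes' rule after each toss), which yields reward $1$ on heads and is charged an amount $G$ for every toss, and which may be retired at any time, the Gittins index of $\mathcal{Q}$ with discount factor $\gamma_a$ is the largest $G$ for which the optimal expected discounted (rewards at step $t$ multiplied by $\gamma_a^t$) difference between rewards and charges is non-negative. It is at least the mean of $\mathcal{Q}$ and equals the mean when $\gamma_a=0$. *)

theory Defs
  imports "HOL-Probability.Probability"
begin

definition beta_density :: "real \<Rightarrow> real \<Rightarrow> real \<Rightarrow> real" where
  "beta_density a b x =
     (if 0 < x \<and> x < 1 then x powr (a - 1) * (1 - x) powr (b - 1) / Beta a b else 0)"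

definition beta_measure :: "real \<Rightarrow> real \<Rightarrow> real measure" where
  "beta_measure a b = density lborel (\<lambda>x. ennreal (beta_density a b x))"

text \<open>A prior Beta(a,b) has mean a/(a+b); after heads it becomes Beta(a+1,b),
  after tails Beta(a,b+1).  The value with charge G per toss, discount g, and the
  option to retire is the limit of finite-horizon values (Bellman iteration).\<close>

definition beta_mean :: "real \<Rightarrow> real \<Rightarrow> real" where
  "beta_mean a b = a / (a + b)"

primrec retire_value :: "nat \<Rightarrow> real \<Rightarrow> real \<Rightarrow> real \<Rightarrow> real \<Rightarrow> real" where
  "retire_value 0 g G a b = 0"
| "retire_value (Suc k) g G a b =
     max 0 (beta_mean a b - G
            + g * (beta_mean a b * retire_value k g G (a + 1) b
                   + (1 - beta_mean a b) * retire_value k g G a (b + 1)))"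

definition opt_retire_value :: "real \<Rightarrow> real \<Rightarrow> real \<Rightarrow> real \<Rightarrow> real" where
  "opt_retire_value g G a b = (SUP k. retire_value k g G a b)"

text \<open>Optimal value when the coin must be tossed at the current step (step 0)
  and may be retired at any later time.\<close>
definition play_value :: "real \<Rightarrow> real \<Rightarrow> real \<Rightarrow> real \<Rightarrow> real" where
  "play_value g G a b =
     beta_mean a b - G
     + g * (beta_mean a b * opt_retire_value g G (a + 1) b
            + (1 - beta_mean a b) * opt_retire_value g G a (b + 1))"

definition gittins_index :: "real \<Rightarrow> real \<Rightarrow> real \<Rightarrow> real" where
  "gittins_index g a b = Sup {G. play_value g G a b \<ge> 0}"

text \<open>Advertisers are 0..n-1.  The winner is the advertiser with the highest effective
  bid; ties are broken in favour of the smallest index.\<close>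

definition auction_winner :: "nat \<Rightarrow> (nat \<Rightarrow> real) \<Rightarrow> nat" where
  "auction_winner n R = (LEAST j. j < n \<and> (\<forall>i<n. R i \<le> R j))"

text \<open>Highest competing effective bid (0 if there is no competitor).\<close>
definition competing_bid :: "nat \<Rightarrow> (nat \<Rightarrow> real) \<Rightarrow> nat \<Rightarrow> real" where
  "competing_bid n R w = Max (insert 0 {R i | i. i < n \<and> i \<noteq> w})"

text \<open>Expected revenue (over the click) of the hybrid auction with bids (m j, c j)
  and indices q j, when the true click probabilities are p j.\<close>
definition hybrid_revenue ::
  "nat \<Rightarrow> (nat \<Rightarrow> real) \<Rightarrow> (nat \<Rightarrow> real) \<Rightarrow> (nat \<Rightarrow> real) \<Rightarrow> (nat \<Rightarrow> real) \<Rightarrow> real" where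
  "hybrid_revenue n m c q p =
     (let R = (\<lambda>j. max (m j) (c j * q j));
          w = auction_winner n R;
          C = competing_bid n R w
      in if m w > c w * q w then C else (C / q w) * p w)"

text \<open>Expected revenue (over the click) of the pay-per-click auction ignoring m.\<close>
definition ppc_revenue ::
  "nat \<Rightarrow> (nat \<Rightarrow> real) \<Rightarrow> (nat \<Rightarrow> real) \<Rightarrow> (nat \<Rightarrow> real) \<Rightarrow> real" where
  "ppc_revenue n c q p =
     (let S = (\<lambda>j. c j * q j);
          w = auction_winner n S
      in (competing_bid n S w / q w) * p w)"

end

theory Submission
  imports Defs
begin

text \<open>The pay-per-click auction ranks by \<open>v j * q j\<close> and charges its winner \<open>d\<close> the second
  score \<open>s\<close> divided by \<open>q d\<close> per click; \<open>d\<close> and \<open>s\<close> do not depend on the click probabilities, so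
  its expected revenue is \<open>s / q d * E (p d)\<close>. The hybrid auction always collects at least
  \<open>s / q d * min (p d) (q d)\<close>: either \<open>d\<close> still wins and pays at least \<open>s\<close> per impression or
  \<open>s / q d\<close> per click, or the winner changed, which by the tie-breaking rule forces a winning
  per-impression bid of at least \<open>v d * q d \<ge> s\<close>. The Gittins index \<open>q d\<close> is at least the prior
  mean \<open>\<mu>\<close>, so it remains to show \<open>E (p - \<mu>)\<^sup>+ \<le> \<mu> / e\<close> for \<open>p\<close> distributed as Beta(a, b) with
  \<open>a \<ge> 1\<close>. The mean excess \<open>f t = E (p - t)\<^sup>+\<close> has \<open>f' t = - P (p > t)\<close>, and \<open>a \<ge> 1\<close> gives
  \<open>f t \<le> \<mu> * P (p > t)\<close> on \<open>[0, \<mu>]\<close>; hence \<open>exp (t / \<mu>) * f t\<close> decreases there and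
  \<open>f \<mu> \<le> f 0 / e = \<mu> / e\<close>.\<close>

section \<open>Beta distributions\<close>

lemma beta_mean_pos: "0 < a \<Longrightarrow> 0 < b \<Longrightarrow> 0 < beta_mean a b"
  by (simp add: beta_mean_def)

lemma beta_mean_less_1: "0 < a \<Longrightarrow> 0 < b \<Longrightarrow> beta_mean a b < 1"
  by (simp add: beta_mean_def)

definition beta_kernel :: "real \<Rightarrow> real \<Rightarrow> real \<Rightarrow> real" where
  "beta_kernel a b x = x powr (a - 1) * (1 - x) powr (b - 1)"

lemma beta_kernel_nonneg: "0 \<le> beta_kernel a b x"
  by (simp add: beta_kernel_def)

lemma Beta_real_pos: "0 < a \<Longrightarrow> 0 < b \<Longrightarrow> 0 < Beta a (b::real)"
  by (simp add: Beta_def)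

lemma beta_density_eq: "beta_density a b x = indicator {0..1} x * beta_kernel a b x / Beta a b"
  by (auto simp: beta_density_def beta_kernel_def indicator_def)

lemma has_integral_beta_kernel:
  "0 < a \<Longrightarrow> 0 < b \<Longrightarrow> (beta_kernel a b has_integral Beta a b) {0..1}"
  unfolding beta_kernel_def[abs_def] by (rule has_integral_Beta_real)

lemma beta_kernel_integrable_on: "0 < a \<Longrightarrow> 0 < b \<Longrightarrow> beta_kernel a b integrable_on {0..1}"
  using has_integral_beta_kernel by blast

lemma borel_measurable_beta_density [measurable]: "beta_density a b \<in> borel_measurable borel"
  unfolding beta_density_def by measurable

lemma sets_beta_measure [measurable_cong]: "sets (beta_measure a b) = sets borel"
  by (simp add: beta_measure_def)

lemma space_beta_measure: "space (beta_measure a b) = UNIV"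
  by (simp add: beta_measure_def)

lemma AE_beta_measure_unit_interval: "AE x in beta_measure a b. 0 \<le> x \<and> x \<le> 1"
  unfolding beta_measure_def
  by (subst AE_density) (auto intro!: AE_I2 simp: beta_density_def)

lemma has_bochner_integral_beta_measure:
  assumes a: "0 < a" and b: "0 < b" and [measurable]: "h \<in> borel_measurable borel"
    and nonneg: "\<And>x. x \<in> {0..1} \<Longrightarrow> 0 \<le> h x"
    and I: "((\<lambda>x. h x * beta_kernel a b x) has_integral I) {0..1}"
  shows "has_bochner_integral (beta_measure a b) h (I / Beta a b)"
proof -
  have [measurable]: "beta_kernel a b \<in> borel_measurable borel"
    unfolding beta_kernel_def[abs_def] by measurable
  have nonneg': "\<And>x. x \<in> {0..1} \<Longrightarrow> 0 \<le> h x * beta_kernel a b x"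
    using nonneg by (simp add: beta_kernel_nonneg)
  have "has_bochner_integral lborel (\<lambda>x. indicator {0..1} x * (h x * beta_kernel a b x)) I"
    using nn_integral_has_integral_lebesgue[OF nonneg' I] has_integral_nonneg[OF I nonneg'] nonneg'
    by (intro has_bochner_integral_nn_integral) (auto simp: indicator_def)
  then have "has_bochner_integral lborel (\<lambda>x. indicator {0..1} x * (h x * beta_kernel a b x) / Beta a b)
      (I / Beta a b)"
    by (rule has_bochner_integral_divide_zero)
  moreover have "beta_density a b x *\<^sub>R h x = indicator {0..1} x * (h x * beta_kernel a b x) / Beta a b" for x
    by (simp add: beta_density_eq)
  ultimately have "has_bochner_integral lborel (\<lambda>x. beta_density a b x *\<^sub>R h x) (I / Beta a b)"
    by simp
  then show ?thesis
    unfolding beta_measure_def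
    by (rule has_bochner_integral_density[rotated 3])
       (use Beta_real_pos[OF a b] in \<open>auto simp: beta_density_eq beta_kernel_nonneg\<close>)
qed

lemma prob_space_beta_measure:
  assumes a: "0 < a" and b: "0 < b"
  shows "prob_space (beta_measure a b)"
proof
  have "emeasure (beta_measure a b) UNIV = (\<integral>\<^sup>+ x. ennreal (beta_density a b x) \<partial>lborel)"
    unfolding beta_measure_def by (subst emeasure_density) auto
  also have "\<dots> = (\<integral>\<^sup>+ x. ennreal (beta_kernel a b x / Beta a b) * indicator {0..1} x \<partial>lborel)"
    by (intro nn_integral_cong) (auto simp: beta_density_eq indicator_def)
  also have "\<dots> = ennreal (Beta a b / Beta a b)"
    using has_integral_divide[OF has_integral_beta_kernel[OF a b], of "Beta a b"] Beta_real_pos[OF a b]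
    by (intro nn_integral_has_integral_lebesgue') (auto simp: beta_kernel_nonneg)
  finally show "emeasure (beta_measure a b) (space (beta_measure a b)) = 1"
    using Beta_real_pos[OF a b] by (simp add: space_beta_measure)
qed

section \<open>The mean excess of a Beta distribution\<close>

lemma has_bochner_integral_beta_measure_id:
  assumes a: "0 < a" and b: "0 < b"
  shows "has_bochner_integral (beta_measure a b) (\<lambda>x. x) (beta_mean a b)"
proof -
  have "beta_kernel (a + 1) b x = x * beta_kernel a b x" if "x \<in> {0..1}" for x
  proof (cases "x = 0")
    case False
    with that have "x powr a = x * x powr (a - 1)"
      using powr_mult_base[of x "a - 1"] by simp
    then show ?thesis by (simp add: beta_kernel_def)
  qed (simp add: beta_kernel_def)
  moreover have "(beta_kernel (a + 1) b has_integral Beta (a + 1) b) {0..1}"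
    using a b by (intro has_integral_beta_kernel) auto
  ultimately have "((\<lambda>x. x * beta_kernel a b x) has_integral Beta (a + 1) b) {0..1}"
    by (rule has_integral_eq)
  then have "has_bochner_integral (beta_measure a b) (\<lambda>x. x) (Beta (a + 1) b / Beta a b)"
    by (intro has_bochner_integral_beta_measure a b) auto
  moreover have "Beta (a + 1) b / Beta a b = beta_mean a b"
    using Beta_plus1_left[of a b] a b Beta_real_pos[OF a b]
    by (auto simp: beta_mean_def field_simps nonpos_Ints_def)
  ultimately show ?thesis by simp
qed

lemma beta_kernel_succ_has_derivative:
  assumes "a + b \<noteq> 0" "0 < x" "x < 1"
  shows "(beta_kernel (a + 1) (b + 1) has_real_derivative
           (a + b) * (beta_mean a b - x) * beta_kernel a b x) (at x)"
proof -
  have "(beta_kernel (a + 1) (b + 1) has_real_derivative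
          a * x powr (a - 1) * (1 - x) powr b - x powr a * (b * (1 - x) powr (b - 1))) (at x)"
    unfolding beta_kernel_def[abs_def] using assms by (auto intro!: derivative_eq_intros)
  moreover have "x powr a = x * x powr (a - 1)" "(1 - x) powr b = (1 - x) * (1 - x) powr (b - 1)"
    and "(a + b) * (beta_mean a b - x) = a - (a + b) * x"
    using assms by (simp_all add: powr_mult_base beta_mean_def field_simps)
  then have "a * x powr (a - 1) * (1 - x) powr b - x powr a * (b * (1 - x) powr (b - 1))
      = (a + b) * (beta_mean a b - x) * beta_kernel a b x"
    unfolding beta_kernel_def by (simp only:) (simp add: algebra_simps)
  ultimately show ?thesis
    by (rule DERIV_cong)
qed

lemma continuous_on_beta_kernel: "1 < a \<Longrightarrow> 1 < b \<Longrightarrow> continuous_on {0..1} (beta_kernel a b)"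
  unfolding beta_kernel_def[abs_def] by (intro continuous_intros continuous_on_powr') auto

lemma has_integral_beta_excess:
  assumes a: "0 < a" and b: "0 < b"
  defines "\<mu> \<equiv> beta_mean a b"
  shows "((\<lambda>x. max 0 (x - \<mu>) * beta_kernel a b x) has_integral
           beta_kernel (a + 1) (b + 1) \<mu> / (a + b)) {0..1}"
proof -
  define F where "F x = - beta_kernel (a + 1) (b + 1) x / (a + b)" for x
  have \<mu>: "0 < \<mu>" "\<mu> < 1"
    using a b unfolding \<mu>_def by (rule beta_mean_pos, rule beta_mean_less_1)
  have "((\<lambda>x. (x - \<mu>) * beta_kernel a b x) has_integral F 1 - F \<mu>) {\<mu>..1}"
  proof (rule fundamental_theorem_of_calculus_interior)
    show "continuous_on {\<mu>..1} F"
      unfolding F_def using \<mu> a b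
      by (intro continuous_intros continuous_on_subset[OF continuous_on_beta_kernel]) auto
  next
    fix x assume "x \<in> {\<mu><..<1}"
    with \<mu> have x: "0 < x" "x < 1" by auto
    have "(F has_real_derivative - ((a + b) * (\<mu> - x) * beta_kernel a b x) / (a + b)) (at x)"
      unfolding F_def \<mu>_def
      by (intro DERIV_cdivide DERIV_minus beta_kernel_succ_has_derivative) (use a b x in auto)
    then have "(F has_real_derivative (x - \<mu>) * beta_kernel a b x) (at x)"
      by (rule DERIV_cong) (use a b in \<open>simp add: field_simps\<close>)
    then show "(F has_vector_derivative (x - \<mu>) * beta_kernel a b x) (at x)"
      by (simp add: has_real_derivative_iff_has_vector_derivative)
  qed (use \<mu> in auto)
  moreover have "F 1 - F \<mu> = beta_kernel (a + 1) (b + 1) \<mu> / (a + b)"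
    by (simp add: F_def beta_kernel_def)
  ultimately have "((\<lambda>x. (x - \<mu>) * beta_kernel a b x) has_integral
                      beta_kernel (a + 1) (b + 1) \<mu> / (a + b)) {\<mu>..1}"
    by simp
  then have upper: "((\<lambda>x. max 0 (x - \<mu>) * beta_kernel a b x) has_integral
                       beta_kernel (a + 1) (b + 1) \<mu> / (a + b)) {\<mu>..1}"
    by (rule has_integral_eq[rotated]) auto
  have lower: "((\<lambda>x. max 0 (x - \<mu>) * beta_kernel a b x) has_integral 0) {0..\<mu>}"
    by (rule has_integral_eq[rotated, OF has_integral_0]) auto
  from has_integral_combine[OF _ _ lower upper] \<mu> show ?thesis
    by simp
qed

lemma beta_kernel_tail_ge:
  assumes a: "1 \<le> a" and b: "0 < b" and t: "0 \<le> t" "t \<le> 1"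
  shows "t powr (a - 1) * (1 - t) powr b / b \<le> integral {t..1} (beta_kernel a b)"
proof -
  define F where "F x = - (t powr (a - 1) * (1 - x) powr b / b)" for x
  have "((\<lambda>x. t powr (a - 1) * (1 - x) powr (b - 1)) has_integral F 1 - F t) {t..1}"
  proof (rule fundamental_theorem_of_calculus_interior)
    show "continuous_on {t..1} F"
      unfolding F_def using b by (intro continuous_intros continuous_on_powr') auto
  next
    fix x assume "x \<in> {t<..<1}"
    then have "(F has_real_derivative t powr (a - 1) * (1 - x) powr (b - 1)) (at x)"
      unfolding F_def using b by (auto intro!: derivative_eq_intros)
    then show "(F has_vector_derivative t powr (a - 1) * (1 - x) powr (b - 1)) (at x)"
      by (simp add: has_real_derivative_iff_has_vector_derivative)
  qed (use t in auto)
  then have lower: "((\<lambda>x. t powr (a - 1) * (1 - x) powr (b - 1)) has_integral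
                      t powr (a - 1) * (1 - t) powr b / b) {t..1}"
    by (simp add: F_def)
  have "(beta_kernel a b has_integral integral {t..1} (beta_kernel a b)) {t..1}"
    using integrable_on_subinterval[OF beta_kernel_integrable_on, of a b t 1] a b t by auto
  then show ?thesis
  proof (rule has_integral_le[OF lower])
    fix x assume "x \<in> {t..1}"
    then show "t powr (a - 1) * (1 - x) powr (b - 1) \<le> beta_kernel a b x"
      using t a unfolding beta_kernel_def by (intro mult_right_mono powr_mono2) auto
  qed
qed

lemma integral_beta_kernel_has_derivative:
  assumes "0 < a" "0 < b" "0 < t" "t < 1"
  shows "((\<lambda>t. integral {0..t} (beta_kernel a b)) has_real_derivative beta_kernel a b t) (at t)"
proof -
  have "isCont (beta_kernel a b) t"
    unfolding beta_kernel_def[abs_def] using assms by (intro continuous_intros) auto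
  then have "((\<lambda>t. integral {0..t} (beta_kernel a b)) has_vector_derivative beta_kernel a b t)
               (at t within {0..1})"
    using integral_has_vector_derivative_continuous_at[OF beta_kernel_integrable_on, of a b t "{}"] assms
    by (auto simp: continuous_at_imp_continuous_within)
  then show ?thesis
    using assms by (simp add: at_within_Icc_at has_real_derivative_iff_has_vector_derivative)
qed

lemma beta_kernel_succ_le_tail:
  assumes a: "1 \<le> a" and b: "0 < b" and t: "0 \<le> t" "t \<le> 1"
  shows "beta_kernel (a + 1) (b + 1) t / (a + b) \<le> t * integral {t..1} (beta_kernel a b)"
proof -
  have "beta_kernel (a + 1) (b + 1) t / (a + b) \<le> beta_kernel (a + 1) (b + 1) t / b"
    using a b by (intro divide_left_mono) (auto simp: beta_kernel_def)
  also have "\<dots> = t * (t powr (a - 1) * (1 - t) powr b / b)"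
    using t by (cases "t = 0") (simp_all add: beta_kernel_def powr_mult_base)
  also have "\<dots> \<le> t * integral {t..1} (beta_kernel a b)"
    using beta_kernel_tail_ge[OF a b t] t by (intro mult_left_mono) auto
  finally show ?thesis .
qed

lemma beta_excess_kernel_le:
  assumes a: "1 \<le> a" and b: "0 < b"
  defines "\<mu> \<equiv> beta_mean a b"
  shows "exp 1 * (beta_kernel (a + 1) (b + 1) \<mu> / (a + b)) \<le> \<mu> * Beta a b"
proof -
  have a0: "0 < a" using a by simp
  have \<mu>: "0 < \<mu>" "\<mu> < 1"
    using a0 b unfolding \<mu>_def by (rule beta_mean_pos, rule beta_mean_less_1)
  define G where "G x = beta_kernel (a + 1) (b + 1) x / (a + b)" for x
  define T where "T t = Beta a b - integral {0..t} (beta_kernel a b)" for t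
  have T_eq: "T t = integral {t..1} (beta_kernel a b)" if "0 \<le> t" "t \<le> 1" for t
    using Henstock_Kurzweil_Integration.integral_combine[OF that beta_kernel_integrable_on[OF a0 b]]
      has_integral_beta_kernel[OF a0 b]
    by (simp add: T_def integral_unique)
  \<comment> \<open>\<open>H t\<close> is \<open>exp (t / \<mu>) * Beta a b\<close> times the mean excess \<open>E (p - t)\<^sup>+\<close>.\<close>
  define H where "H t = exp (t / \<mu>) * (G t + (\<mu> - t) * T t)" for t
  have "H \<mu> \<le> H 0"
  proof (rule DERIV_nonpos_imp_decreasing_open[of 0 \<mu>])
    have "continuous_on {0..\<mu>} G"
      unfolding G_def[abs_def] using \<mu> a0 b
      by (intro continuous_intros continuous_on_subset[OF continuous_on_beta_kernel]) auto
    moreover have "continuous_on {0..\<mu>} T"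
      using continuous_on_subset[OF indefinite_integral_continuous_1[OF beta_kernel_integrable_on[OF a0 b]]] \<mu>
      unfolding T_def[abs_def] by (intro continuous_intros) auto
    ultimately show "continuous_on {0..\<mu>} H"
      unfolding H_def[abs_def] using \<mu> by (intro continuous_intros) auto
  next
    fix t assume t: "0 < t" "t < \<mu>"
    with \<mu> have t1: "t < 1" by simp
    have "(G has_real_derivative (a + b) * (beta_mean a b - t) * beta_kernel a b t / (a + b)) (at t)"
      unfolding G_def using a0 b t t1 by (intro DERIV_cdivide beta_kernel_succ_has_derivative) auto
    then have "(G has_real_derivative (\<mu> - t) * beta_kernel a b t) (at t)"
      using a0 b by (simp add: \<mu>_def)
    moreover have "(T has_real_derivative - beta_kernel a b t) (at t)"
      using DERIV_diff[OF DERIV_const integral_beta_kernel_has_derivative[OF a0 b t(1) t1]]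
      by (simp add: T_def[abs_def])
    ultimately have "((\<lambda>t. G t + (\<mu> - t) * T t) has_real_derivative - T t) (at t)"
      using DERIV_add[OF _ DERIV_mult'[OF DERIV_diff[OF DERIV_const[of \<mu>] DERIV_ident]]] by fastforce
    moreover have "((\<lambda>t. exp (t / \<mu>)) has_real_derivative exp (t / \<mu>) * (1 / \<mu>)) (at t)"
      using \<mu> by (auto intro!: derivative_eq_intros)
    ultimately have "(H has_real_derivative
        exp (t / \<mu>) * - T t + exp (t / \<mu>) * (1 / \<mu>) * (G t + (\<mu> - t) * T t)) (at t)"
      unfolding H_def[abs_def] by (rule DERIV_mult'[rotated])
    then have "(H has_real_derivative exp (t / \<mu>) * ((G t - t * T t) / \<mu>)) (at t)"
      by (rule DERIV_cong) (use \<mu> in \<open>simp add: field_simps\<close>)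
    moreover have "G t \<le> t * T t"
      using beta_kernel_succ_le_tail[OF a b, of t] T_eq[of t] t t1 by (simp add: G_def)
    then have "exp (t / \<mu>) * ((G t - t * T t) / \<mu>) \<le> 0"
      using \<mu> by (intro mult_nonneg_nonpos divide_nonpos_pos) auto
    ultimately show "\<exists>y. (H has_real_derivative y) (at t) \<and> y \<le> 0"
      by (auto intro!: exI[of _ "exp (t / \<mu>) * ((G t - t * T t) / \<mu>)"])
  qed (use \<mu> in simp)
  moreover have "H 0 = \<mu> * Beta a b" by (simp add: H_def G_def T_def beta_kernel_def)
  moreover have "H \<mu> = exp 1 * (beta_kernel (a + 1) (b + 1) \<mu> / (a + b))"
    using \<mu> by (simp add: H_def G_def)
  ultimately show ?thesis by simp
qed

lemma beta_expectation_min_ge: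
  assumes a: "1 \<le> a" and b: "0 < b" and q: "beta_mean a b \<le> q"
  shows "(1 - exp (-1)) * beta_mean a b \<le> (LINT x|beta_measure a b. min x q)"
proof -
  have a0: "0 < a" using a by simp
  define \<mu> where "\<mu> = beta_mean a b"
  define K where "K = beta_kernel (a + 1) (b + 1) \<mu> / (a + b)"
  interpret prob_space "beta_measure a b"
    by (rule prob_space_beta_measure[OF a0 b])
  have X: "has_bochner_integral (beta_measure a b) (\<lambda>x. x) \<mu>"
    using has_bochner_integral_beta_measure_id[OF a0 b] by (simp add: \<mu>_def)
  have E: "has_bochner_integral (beta_measure a b) (\<lambda>x. max 0 (x - \<mu>)) (K / Beta a b)"
    using has_integral_beta_excess[OF a0 b]
    by (intro has_bochner_integral_beta_measure a0 b) (auto simp: \<mu>_def K_def)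
  have "integrable (beta_measure a b) (\<lambda>x. min x q)"
  proof (rule Bochner_Integration.integrable_bound)
    show "integrable (beta_measure a b) (\<lambda>x. \<bar>x\<bar> + \<bar>q\<bar>)"
      using X by (intro Bochner_Integration.integrable_add integrable_const) (auto simp: has_bochner_integral_iff)
  qed (auto simp: measurable_cong_sets[OF sets_beta_measure refl])
  then have "(LINT x|beta_measure a b. x - max 0 (x - \<mu>)) \<le> (LINT x|beta_measure a b. min x q)"
    using X E q by (intro integral_mono) (auto simp: has_bochner_integral_iff \<mu>_def)
  moreover have "(LINT x|beta_measure a b. x - max 0 (x - \<mu>)) = \<mu> - K / Beta a b"
    using X E by (auto simp: has_bochner_integral_iff)
  moreover have "K / Beta a b \<le> \<mu> * exp (-1)"
  proof -
    have "exp 1 * K \<le> \<mu> * Beta a b"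
      using beta_excess_kernel_le[OF a b] by (simp add: K_def \<mu>_def)
    then have "K \<le> \<mu> * exp (-1) * Beta a b"
      by (simp add: exp_minus field_simps)
    then show ?thesis
      using Beta_real_pos[OF a0 b] by (simp add: pos_divide_le_eq)
  qed
  ultimately show ?thesis
    by (simp add: \<mu>_def algebra_simps)
qed

section \<open>Gittins index of a Beta prior\<close>

lemma retire_value_eq_0:
  assumes "1 \<le> G" "0 < a" "0 < b"
  shows "retire_value k g G a b = 0"
  using assms(2,3)
proof (induction k arbitrary: a b)
  case (Suc k)
  then show ?case
    using assms(1) beta_mean_less_1[of a b] by simp
qed simp

lemma retire_value_bounds:
  assumes "0 \<le> G" "0 \<le> g" "g < 1" "0 < a" "0 < b"
  shows "0 \<le> retire_value k g G a b \<and> retire_value k g G a b \<le> 1 / (1 - g)"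
  using assms(4,5)
proof (induction k arbitrary: a b)
  case 0
  then show ?case using assms by simp
next
  case (Suc k)
  define m where "m = beta_mean a b"
  define X where "X = retire_value k g G (a + 1) b"
  define Y where "Y = retire_value k g G a (b + 1)"
  have m: "0 < m" "m < 1"
    using Suc.prems beta_mean_pos beta_mean_less_1 by (auto simp: m_def)
  have X: "0 \<le> X" "X \<le> 1 / (1 - g)" and Y: "0 \<le> Y" "Y \<le> 1 / (1 - g)"
    using Suc.IH[of "a + 1" b] Suc.IH[of a "b + 1"] Suc.prems by (auto simp: X_def Y_def)
  have "m * X + (1 - m) * Y \<le> m * (1 / (1 - g)) + (1 - m) * (1 / (1 - g))"
    using m X Y by (intro add_mono mult_left_mono) auto
  also have "\<dots> = 1 / (1 - g)"
    by (simp add: add_divide_distrib[symmetric])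
  finally have "g * (m * X + (1 - m) * Y) \<le> g * (1 / (1 - g))"
    using assms(2) by (rule mult_left_mono)
  also have "\<dots> = 1 / (1 - g) - 1"
    using assms(3) by (simp add: field_simps)
  finally show ?case
    using m assms(1,3) by (simp add: m_def[symmetric] X_def[symmetric] Y_def[symmetric])
qed

lemma opt_retire_value_nonneg:
  assumes "0 \<le> G" "0 \<le> g" "g < 1" "0 < a" "0 < b"
  shows "0 \<le> opt_retire_value g G a b"
proof -
  have "bdd_above (range (\<lambda>k. retire_value k g G a b))"
    using retire_value_bounds[OF assms] by (intro bdd_aboveI2) blast
  then have "retire_value 0 g G a b \<le> opt_retire_value g G a b"
    unfolding opt_retire_value_def by (rule cSUP_upper[OF UNIV_I])
  then show ?thesis by simp
qed

text \<open>At charge \<open>beta_mean a b\<close> the first toss breaks even and retiring afterwards is free;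
  a charge above \<open>1\<close> exceeds every reward, which bounds the set defining the index.\<close>
lemma beta_mean_le_gittins_index:
  assumes "0 \<le> g" "g < 1" "0 < a" "0 < b"
  shows "beta_mean a b \<le> gittins_index g a b"
proof -
  have m: "0 < beta_mean a b" "beta_mean a b < 1"
    using assms(3,4) by (rule beta_mean_pos, rule beta_mean_less_1)
  have "0 \<le> play_value g (beta_mean a b) a b"
    unfolding play_value_def
    using opt_retire_value_nonneg[of "beta_mean a b" g "a + 1" b]
      opt_retire_value_nonneg[of "beta_mean a b" g a "b + 1"] m assms
    by (intro add_nonneg_nonneg mult_nonneg_nonneg) auto
  moreover have "bdd_above {G. 0 \<le> play_value g G a b}"
  proof (rule bdd_aboveI)
    fix G assume G: "G \<in> {G. 0 \<le> play_value g G a b}"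
    show "G \<le> 1"
    proof (rule ccontr)
      assume "\<not> G \<le> 1"
      then have "play_value g G a b = beta_mean a b - G"
        using retire_value_eq_0[of G] assms by (simp add: play_value_def opt_retire_value_def)
      with G \<open>\<not> G \<le> 1\<close> m show False by simp
    qed
  qed
  ultimately show ?thesis
    unfolding gittins_index_def by (intro cSup_upper) auto
qed

section \<open>Single-slot auctions\<close>

lemma auction_winner:
  assumes "0 < n"
  shows auction_winner_less: "auction_winner n R < n"
    and auction_winner_max: "i < n \<Longrightarrow> R i \<le> R (auction_winner n R)"
    and less_auction_winner: "j < auction_winner n R \<Longrightarrow> R j < R (auction_winner n R)"
proof -
  define P where "P j \<longleftrightarrow> j < n \<and> (\<forall>i<n. R i \<le> R j)" for j
  have "Max (R ` {..<n}) \<in> R ` {..<n}"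
    using assms by (intro Max_in) auto
  then obtain k where "k < n" "R k = Max (R ` {..<n})"
    by auto
  then have "P k"
    by (auto simp: P_def)
  then have w: "P (auction_winner n R)"
    unfolding auction_winner_def P_def[symmetric] by (rule LeastI)
  then show "auction_winner n R < n" "i < n \<Longrightarrow> R i \<le> R (auction_winner n R)"
    by (auto simp: P_def)
  assume j: "j < auction_winner n R"
  then have "\<not> P j"
    unfolding auction_winner_def P_def[symmetric] by (rule not_less_Least)
  with j w show "R j < R (auction_winner n R)"
    by (auto simp: P_def not_le)
qed

lemma competing_bid_eq_Max:
  "competing_bid n R w = Max (insert 0 (R ` {i. i < n \<and> i \<noteq> w}))"
  unfolding competing_bid_def by (simp add: setcompr_eq_image)

lemma competing_bid_nonneg: "0 \<le> competing_bid n R w"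
  unfolding competing_bid_eq_Max by (rule Max_ge) auto

lemma competing_bid_ge: "i < n \<Longrightarrow> i \<noteq> w \<Longrightarrow> R i \<le> competing_bid n R w"
  unfolding competing_bid_eq_Max by (rule Max_ge) auto

lemma competing_bid_le:
  "(\<And>i. i < n \<Longrightarrow> i \<noteq> w \<Longrightarrow> R i \<le> X) \<Longrightarrow> 0 \<le> X \<Longrightarrow> competing_bid n R w \<le> X"
  unfolding competing_bid_eq_Max by (rule Max.boundedI) auto

lemma competing_bid_mono:
  "(\<And>i. i < n \<Longrightarrow> S i \<le> R i) \<Longrightarrow> competing_bid n S w \<le> competing_bid n R w"
  by (rule competing_bid_le) (auto intro: order_trans competing_bid_ge competing_bid_nonneg)

lemma auction_winner_raised_bid:
  assumes n: "0 < n" and SR: "\<And>j. j < n \<Longrightarrow> S j \<le> R j"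
    and ne: "auction_winner n R \<noteq> auction_winner n S"
  shows "S (auction_winner n R) < R (auction_winner n R)"
proof (rule ccontr)
  define w d where "w = auction_winner n R" and "d = auction_winner n S"
  have w: "w < n" and d: "d < n"
    using auction_winner_less[OF n] by (auto simp: w_def d_def)
  assume "\<not> S (auction_winner n R) < R (auction_winner n R)"
  then have "R w = S w"
    using SR[OF w] by (simp add: w_def)
  moreover have "S w \<le> S d" "S d \<le> R d" "R d \<le> R w"
    using auction_winner_max[OF n] SR[OF d] w d by (auto simp: w_def d_def)
  ultimately have "S w = S d" "R d = R w"
    by auto
  then show False
    using less_auction_winner[OF n, of w S] less_auction_winner[OF n, of d R] ne
    by (cases w d rule: linorder_cases) (auto simp: w_def d_def)
qed

lemma hybrid_revenue_ge:
  assumes n: "0 < n" and c: "\<And>j. j < n \<Longrightarrow> 0 \<le> c j" and q: "\<And>j. j < n \<Longrightarrow> 0 < q j"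
  defines "S \<equiv> \<lambda>j. c j * q j"
  defines "d \<equiv> auction_winner n S"
  assumes p: "0 \<le> p d"
  shows "competing_bid n S d / q d * min (p d) (q d) \<le> hybrid_revenue n m c q p"
proof -
  define R where "R j = max (m j) (c j * q j)" for j
  define w where "w = auction_winner n R"
  define C where "C = competing_bid n R w"
  define second where "second = competing_bid n S d"
  have hybrid: "hybrid_revenue n m c q p = (if m w > c w * q w then C else C / q w * p w)"
    by (simp add: hybrid_revenue_def Let_def R_def[abs_def] w_def C_def)
  have SR: "S j \<le> R j" for j
    by (simp add: S_def R_def)
  have d: "d < n" and qd: "0 < q d"
    using auction_winner_less[OF n] q by (auto simp: d_def)
  have second: "0 \<le> second" "second \<le> S d"
    using auction_winner_max[OF n] c[OF d] qd
    by (auto simp: second_def d_def S_def competing_bid_nonneg intro!: competing_bid_le)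
  have "second / q d * min (p d) (q d) \<le> second / q d * q d"
    using second qd by (intro mult_left_mono) auto
  then have scaled: "second / q d * min (p d) (q d) \<le> second"
    using qd by simp
  show ?thesis
  proof (cases "w = d")
    case True
    have "second \<le> C"
      unfolding second_def C_def True by (rule competing_bid_mono) (rule SR)
    moreover have "second / q d * min (p d) (q d) \<le> second / q d * p d"
      using second qd by (intro mult_left_mono) auto
    moreover have "second / q d * p d \<le> C / q d * p d"
      using \<open>second \<le> C\<close> qd p by (intro mult_right_mono divide_right_mono) auto
    ultimately show ?thesis
      using scaled True by (auto simp: hybrid second_def)
  next
    case False
    then have "S w < R w"
      using auction_winner_raised_bid[OF n SR] by (simp add: w_def d_def)
    then have "m w > c w * q w"
      by (simp add: S_def R_def)
    moreover have "S d \<le> C"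
      using SR[of d] competing_bid_ge[of d n w R] d False by (simp add: C_def)
    ultimately show ?thesis
      using scaled second by (simp add: hybrid second_def)
  qed
qed

lemma hybrid_revenue_truthful_bounds:
  assumes n: "0 < n" and v: "\<And>j. j < n \<Longrightarrow> 0 \<le> v j" and q: "\<And>j. j < n \<Longrightarrow> 0 < q j"
    and p: "\<And>j. j < n \<Longrightarrow> 0 \<le> p j \<and> p j \<le> 1"
  shows "0 \<le> hybrid_revenue n (\<lambda>j. v j * p j) v q p"
    and "hybrid_revenue n (\<lambda>j. v j * p j) v q p \<le> (\<Sum>j<n. v j * (1 + q j))"
proof -
  define R where "R j = max (v j * p j) (v j * q j)" for j
  define w where "w = auction_winner n R"
  define C where "C = competing_bid n R w"
  define K where "K = (\<Sum>j<n. v j * (1 + q j))"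
  have hybrid: "hybrid_revenue n (\<lambda>j. v j * p j) v q p
      = (if v w * p w > v w * q w then C else C / q w * p w)"
    by (simp add: hybrid_revenue_def Let_def R_def[abs_def] w_def C_def)
  have w: "w < n"
    using auction_winner_less[OF n] by (simp add: w_def)
  have "v j * (1 + q j) \<le> K" if "j < n" for j
    unfolding K_def using that v q by (intro member_le_sum) (auto simp: less_imp_le)
  moreover have "R j \<le> v j * (1 + q j)" if "j < n" for j
  proof -
    have "v j * p j \<le> v j" "0 \<le> v j * q j"
      using v[OF that] p[OF that] q[OF that] by (simp_all add: mult_left_le)
    then show ?thesis
      using v[OF that] by (auto simp: R_def algebra_simps)
  qed
  ultimately have R_le: "R j \<le> K" if "j < n" for j
    using that by (meson order_trans)
  have "0 \<le> R w"
    using v[OF w] q[OF w] by (simp add: R_def le_max_iff_disj)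
  then have "C \<le> R w"
    unfolding C_def using auction_winner_max[OF n, of _ R] by (intro competing_bid_le) (auto simp: w_def)
  then have C: "0 \<le> C" "C \<le> K" "C \<le> R w"
    using R_le[OF w] by (auto simp: C_def competing_bid_nonneg)
  show "0 \<le> hybrid_revenue n (\<lambda>j. v j * p j) v q p"
    using C p[OF w] q[OF w] by (simp add: hybrid)
  have "C / q w * p w \<le> K" if per_click: "\<not> v w * p w > v w * q w"
  proof -
    have "C / q w * p w \<le> R w / q w * p w"
      using C p[OF w] q[OF w] by (intro mult_right_mono divide_right_mono) auto
    also have "\<dots> = v w * p w"
      using per_click q[OF w] by (simp add: R_def)
    also have "\<dots> \<le> R w"
      by (simp add: R_def)
    finally show ?thesis
      using R_le[OF w] by simp
  qed
  then show "hybrid_revenue n (\<lambda>j. v j * p j) v q p \<le> K"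
    using C by (simp add: hybrid)
qed

lemma borel_measurable_competing_bid [measurable]:
  assumes [measurable]: "\<And>j. (\<lambda>x. R x j) \<in> borel_measurable M"
  shows "(\<lambda>x. competing_bid n (R x) w) \<in> borel_measurable M"
proof -
  define A where "A = {i. i < n \<and> i \<noteq> w}"
  have "finite A"
    by (simp add: A_def)
  then have "competing_bid n (R x) w = (if A = {} then 0 else max 0 (Max ((\<lambda>i. R x i) ` A)))" for x
    unfolding competing_bid_eq_Max A_def[symmetric] by (simp add: Max_insert)
  with \<open>finite A\<close> show ?thesis
    by simp
qed

lemma measurable_auction_winner:
  assumes [measurable]: "\<And>j. (\<lambda>x. R x j) \<in> borel_measurable M"
  shows "(\<lambda>x. auction_winner n (R x)) \<in> M \<rightarrow>\<^sub>M count_space UNIV"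
  unfolding auction_winner_def
proof (rule measurable_Least)
  fix j
  have "{x \<in> space M. j < n \<and> (\<forall>i<n. R x i \<le> R x j)} \<in> sets M"
    by (cases "j < n") auto
  then show "(\<lambda>x. j < n \<and> (\<forall>i<n. R x i \<le> R x j)) \<in> M \<rightarrow>\<^sub>M count_space UNIV"
    unfolding pred_def by simp
qed

lemma borel_measurable_hybrid_revenue:
  assumes [measurable]: "\<And>j. (\<lambda>x. m x j) \<in> borel_measurable M" "\<And>j. (\<lambda>x. p x j) \<in> borel_measurable M"
  shows "(\<lambda>x. hybrid_revenue n (m x) c q (p x)) \<in> borel_measurable M"
proof -
  define R where "R x j = max (m x j) (c j * q j)" for x j
  have [measurable]: "(\<lambda>x. R x j) \<in> borel_measurable M" for j
    unfolding R_def by measurable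
  define F where "F j x = (if m x j > c j * q j then competing_bid n (R x) j
                           else competing_bid n (R x) j / q j * p x j)" for j x
  have "(\<lambda>x. F j x) \<in> borel_measurable M" for j
    unfolding F_def by measurable
  then have "(\<lambda>x. F (auction_winner n (R x)) x) \<in> borel_measurable M"
    by (rule measurable_compose_countable'[OF _ measurable_auction_winner]) auto
  moreover have "hybrid_revenue n (m x) c q (p x) = F (auction_winner n (R x)) x" for x
    by (simp add: hybrid_revenue_def Let_def F_def R_def[abs_def])
  ultimately show ?thesis
    by simp
qed

lemma integrable_hybrid_revenue:
  fixes M :: "(nat \<Rightarrow> real) measure"
  assumes "prob_space M" and meas: "\<And>j. (\<lambda>p. p j) \<in> borel_measurable M"
    and unit: "AE p in M. \<forall>j<n. 0 \<le> p j \<and> p j \<le> 1"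
    and n: "0 < n" and v: "\<And>j. j < n \<Longrightarrow> 0 \<le> v j" and q: "\<And>j. j < n \<Longrightarrow> 0 < q j"
  shows "integrable M (\<lambda>p. hybrid_revenue n (\<lambda>j. v j * p j) v q p)"
proof -
  interpret prob_space M by fact
  have "AE p in M. norm (hybrid_revenue n (\<lambda>j. v j * p j) v q p) \<le> (\<Sum>j<n. v j * (1 + q j))"
    using unit by eventually_elim (use hybrid_revenue_truthful_bounds[OF n v q] in auto)
  then show ?thesis
    by (rule integrable_const_bound) (intro borel_measurable_hybrid_revenue; use meas in simp)
qed

lemma expected_hybrid_revenue_ge:
  fixes M :: "(nat \<Rightarrow> real) measure"
  assumes "prob_space M" and meas: "\<And>j. (\<lambda>p. p j) \<in> borel_measurable M"
    and unit: "AE p in M. \<forall>j<n. 0 \<le> p j \<and> p j \<le> 1"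
    and v: "\<And>j. j < n \<Longrightarrow> 0 \<le> v j" and q: "\<And>j. j < n \<Longrightarrow> 0 < q j"
    and marginal: "\<And>j. j < n \<Longrightarrow> c * (LINT p|M. p j) \<le> (LINT p|M. min (p j) (q j))"
  shows "c * (LINT p|M. ppc_revenue n v q p) \<le> (LINT p|M. hybrid_revenue n (\<lambda>j. v j * p j) v q p)"
proof (cases "n = 0")
  case True
  then show ?thesis
    by (simp add: hybrid_revenue_def ppc_revenue_def competing_bid_def Let_def)
next
  case False
  then have n: "0 < n" by simp
  interpret prob_space M by fact
  define S where "S j = v j * q j" for j
  define d where "d = auction_winner n S"
  define k where "k = competing_bid n S d / q d"
  have d: "d < n"
    using auction_winner_less[OF n] by (simp add: d_def)
  have k: "0 \<le> k"
    using q[OF d] by (simp add: k_def competing_bid_nonneg)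
  have ppc: "ppc_revenue n v q p = k * p d" for p
    by (simp add: ppc_revenue_def Let_def k_def d_def S_def[abs_def])
  have unit_d: "AE p in M. norm (min (p d) (q d)) \<le> 1"
    using unit by eventually_elim (use d q[OF d] in auto)
  have "c * (LINT p|M. ppc_revenue n v q p) = k * (c * (LINT p|M. p d))"
    by (simp add: ppc)
  also have "\<dots> \<le> k * (LINT p|M. min (p d) (q d))"
    using k marginal[OF d] by (rule mult_left_mono[rotated])
  also have "\<dots> = (LINT p|M. k * min (p d) (q d))"
    by simp
  also have "\<dots> \<le> (LINT p|M. hybrid_revenue n (\<lambda>j. v j * p j) v q p)"
  proof (rule integral_mono_AE)
    show "integrable M (\<lambda>p. k * min (p d) (q d))"
      using unit_d meas by (intro integrable_mult_right integrable_const_bound[of _ 1]) auto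
    show "integrable M (\<lambda>p. hybrid_revenue n (\<lambda>j. v j * p j) v q p)"
      using prob_space_axioms meas unit n v q by (rule integrable_hybrid_revenue)
    show "AE p in M. k * min (p d) (q d) \<le> hybrid_revenue n (\<lambda>j. v j * p j) v q p"
      using unit
    proof eventually_elim
      case (elim p)
      then have "0 \<le> p d"
        using d by simp
      then show ?case
        using hybrid_revenue_ge[where c=v and m="\<lambda>j. v j * p j", OF n v q]
        by (simp add: k_def d_def S_def[abs_def])
    qed
  qed
  finally show ?thesis .
qed

lemma integral_PiM_component:
  fixes f :: "'a \<Rightarrow> real"
  assumes "\<And>i. i \<in> I \<Longrightarrow> prob_space (M i)" "k \<in> I" "f \<in> borel_measurable (M k)"
  shows "(LINT x|PiM I M. f (x k)) = (LINT y|M k. f y)"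
proof -
  have *: "distr (PiM I M) (M k) (\<lambda>x. x k) = M k"
    by (rule distr_PiM_component[OF assms(1,2)])
  have "(LINT y|M k. f y) = (LINT y|distr (PiM I M) (M k) (\<lambda>x. x k). f y)"
    unfolding * ..
  also have "\<dots> = (LINT x|PiM I M. f (x k))"
    using assms(2,3) by (intro integral_distr measurable_component_singleton)
  finally show ?thesis ..
qed

lemma measurable_PiM_component_borel:
  assumes "\<And>i. i \<in> I \<Longrightarrow> sets (M i) = sets borel"
  shows "(\<lambda>x. x k) \<in> borel_measurable (PiM I M)"
proof (cases "k \<in> I")
  case True
  then have "(\<lambda>x. x k) \<in> PiM I M \<rightarrow>\<^sub>M M k"
    by (rule measurable_component_singleton)
  then show ?thesis
    by (subst measurable_cong_sets[OF refl assms[OF True, symmetric]])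
next
  case False
  have "(\<lambda>_. undefined) \<in> borel_measurable (PiM I M)"
    by simp
  then show ?thesis
    by (rule measurable_cong[THEN iffD1, rotated])
       (use False in \<open>auto simp: space_PiM PiE_def extensional_def\<close>)
qed

lemma PiM_beta_measure_min_ge:
  assumes ab: "\<And>j. j \<in> I \<Longrightarrow> 1 \<le> \<alpha> j \<and> 0 < \<beta> j" and k: "k \<in> I"
    and r: "beta_mean (\<alpha> k) (\<beta> k) \<le> r"
  defines "M \<equiv> PiM I (\<lambda>j. beta_measure (\<alpha> j) (\<beta> j))"
  shows "(1 - exp (-1)) * (LINT p|M. p k) \<le> (LINT p|M. min (p k) r)"
proof -
  have prob: "prob_space (beta_measure (\<alpha> j) (\<beta> j))" if "j \<in> I" for j
    using ab[OF that] by (intro prob_space_beta_measure) auto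
  have a: "1 \<le> \<alpha> k" and b: "0 < \<beta> k"
    using ab[OF k] by auto
  have "(LINT p|M. p k) = (LINT x|beta_measure (\<alpha> k) (\<beta> k). x)"
    unfolding M_def by (rule integral_PiM_component[OF prob k]) measurable
  also have "\<dots> = beta_mean (\<alpha> k) (\<beta> k)"
    using has_bochner_integral_beta_measure_id[of "\<alpha> k" "\<beta> k"] a b
    by (simp add: has_bochner_integral_iff)
  finally have "(1 - exp (-1)) * (LINT p|M. p k) = (1 - exp (-1)) * beta_mean (\<alpha> k) (\<beta> k)"
    by simp
  also have "\<dots> \<le> (LINT x|beta_measure (\<alpha> k) (\<beta> k). min x r)"
    using a b r by (rule beta_expectation_min_ge)
  also have "\<dots> = (LINT p|M. min (p k) r)"
    unfolding M_def by (rule integral_PiM_component[OF prob k, symmetric]) measurable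
  finally show ?thesis .
qed

theorem theorem2:
  fixes n :: nat and v \<alpha> \<beta> :: "nat \<Rightarrow> real" and \<gamma> :: real
  assumes "\<And>j. j < n \<Longrightarrow> 0 \<le> v j"
    and "\<And>j. j < n \<Longrightarrow> 1 \<le> \<alpha> j"
    and "\<And>j. j < n \<Longrightarrow> 1 \<le> \<beta> j"
    and "0 \<le> \<gamma>" and "\<gamma> < 1"
  defines "q \<equiv> (\<lambda>j. gittins_index \<gamma> (\<alpha> j) (\<beta> j))"
    and "M \<equiv> PiM {..<n} (\<lambda>j. beta_measure (\<alpha> j) (\<beta> j))"
  shows "(LINT p|M. hybrid_revenue n (\<lambda>j. v j * p j) v q p)
           \<ge> (1 - exp (-1)) * (LINT p|M. ppc_revenue n v q p)"
proof (rule expected_hybrid_revenue_ge)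
  have \<alpha>: "0 < \<alpha> j" and \<beta>: "0 < \<beta> j" if "j < n" for j
    using assms(2,3)[OF that] by auto
  have prob: "prob_space (beta_measure (\<alpha> j) (\<beta> j))" if "j \<in> {..<n}" for j
    using that \<alpha> \<beta> by (simp add: prob_space_beta_measure)
  have mean_le_q: "beta_mean (\<alpha> j) (\<beta> j) \<le> q j" if "j < n" for j
    unfolding q_def using assms(4,5) \<alpha>[OF that] \<beta>[OF that] by (rule beta_mean_le_gittins_index)
  show "prob_space M"
    unfolding M_def using prob by (rule prob_space_PiM)
  show "(\<lambda>p. p j) \<in> borel_measurable M" for j
    unfolding M_def by (rule measurable_PiM_component_borel) (simp add: sets_beta_measure)
  have "AE p in M. \<forall>j\<in>{..<n}. 0 \<le> p j \<and> p j \<le> 1"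
    unfolding M_def
  proof (rule AE_finite_allI)
    show "AE p in PiM {..<n} (\<lambda>j. beta_measure (\<alpha> j) (\<beta> j)). 0 \<le> p j \<and> p j \<le> 1"
      if "j \<in> {..<n}" for j
      using prob that AE_beta_measure_unit_interval by (rule AE_PiM_component)
  qed simp
  then show "AE p in M. \<forall>j<n. 0 \<le> p j \<and> p j \<le> 1"
    by eventually_elim auto
  show "0 \<le> v j" if "j < n" for j
    using assms(1) that .
  show "0 < q j" if "j < n" for j
    using mean_le_q[OF that] beta_mean_pos[OF \<alpha>[OF that] \<beta>[OF that]] by linarith
  show "(1 - exp (-1)) * (LINT p|M. p j) \<le> (LINT p|M. min (p j) (q j))" if "j < n" for j
    unfolding M_def using assms(2) \<beta> mean_le_q that by (intro PiM_beta_measure_min_ge) auto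
qed

end
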